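(* Let $\Sigma^*$ be an $n\times n$ positive definite matrix whose conditional independence structure is a tree $T^*$ on $\{1,\dots,n\}$, let $D^*$ be a diagonal matrix with nonnegative diagonal entries, and let $\Sigma^o=\Sigma^*+D^*$. Suppose $\Sigma^o=\Sigma'+D'$ where $\Sigma'$ is an $n\times n$ positive definite matrix whose conditional independence structure is a tree $T'$ and $D'$ is a diagonal matrix with nonnegative diagonal entries. Then $T'\in\mathcal{T}_{T^*}$.
   Context: For an $n\times n$ positive definite matrix $\Sigma$ with inverse $\Omega=\Sigma^{-1}$, its conditional independence structure is the graph on $\{1,\dots,n\}$ with an edge $\{i,j\}$ ($i\neq j$) iff $\Omega_{ij}\neq 0$. Let $\mathcal{L}$ be the set of leaves of $T^*$. For a subset $\mathcal{S}\subseteq\mathcal{L}$ in which no two leaves share a common neighbor, let $T^{\mathcal{S}}$ be the tree obtained from $T^*$ by exchanging the position of each leaf $a\in\mathcal{S}$ with its unique neighbor (i.e. the image of $T^*$ under the permutation of labels swapping each such leaf with its neighbor). $\mathcal{T}_{T^*}$ is the set of all trees $T^{\mathcal{S}}$ over all such subsets $\mathcal{S}$. *)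

theory Defs
  imports "HOL-Analysis.Analysis"
begin

text \<open>Matrices are real n x n matrices indexed by a finite type 'n
(vertices 1..n are the elements of 'n). Graphs on the vertex set UNIV
are given by their edge sets, edges being 2-element sets.\<close>

definition pos_def_mat :: "real^'n^'n \<Rightarrow> bool" where
  "pos_def_mat A \<longleftrightarrow> transpose A = A \<and> (\<forall>x. x \<noteq> 0 \<longrightarrow> x \<bullet> (A *v x) > 0)"

definition nonneg_diag_mat :: "real^'n^'n \<Rightarrow> bool" where
  "nonneg_diag_mat D \<longleftrightarrow> (\<forall>i j. i \<noteq> j \<longrightarrow> D $ i $ j = 0) \<and> (\<forall>i. D $ i $ i \<ge> 0)"

definition ci_graph :: "real^'n^'n \<Rightarrow> 'n set set" where
  "ci_graph S = {{i, j} | i j. i \<noteq> j \<and> matrix_inv S $ i $ j \<noteq> 0}"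

definition adj :: "'n set set \<Rightarrow> 'n \<Rightarrow> 'n \<Rightarrow> bool" where
  "adj E u v \<longleftrightarrow> u \<noteq> v \<and> {u, v} \<in> E"

definition is_graph :: "'n set set \<Rightarrow> bool" where
  "is_graph E \<longleftrightarrow> (\<forall>e\<in>E. card e = 2)"

definition connected_graph :: "'n set set \<Rightarrow> bool" where
  "connected_graph E \<longleftrightarrow> (\<forall>u v. (adj E)\<^sup>*\<^sup>* u v)"

definition has_cycle :: "'n set set \<Rightarrow> bool" where
  "has_cycle E \<longleftrightarrow> (\<exists>vs. length vs \<ge> 3 \<and> distinct vs
      \<and> (\<forall>i. Suc i < length vs \<longrightarrow> adj E (vs ! i) (vs ! Suc i))
      \<and> adj E (last vs) (hd vs))"

definition is_tree :: "'n set set \<Rightarrow> bool" where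
  "is_tree E \<longleftrightarrow> is_graph E \<and> connected_graph E \<and> \<not> has_cycle E"

definition leaves :: "'n set set \<Rightarrow> 'n set" where
  "leaves E = {v. card {u. adj E v u} = 1}"

definition nbr :: "'n set set \<Rightarrow> 'n \<Rightarrow> 'n" where
  "nbr E a = (THE u. adj E a u)"

definition admissible_leaf_set :: "'n set set \<Rightarrow> 'n set \<Rightarrow> bool" where
  "admissible_leaf_set E S \<longleftrightarrow> S \<subseteq> leaves E
      \<and> (\<forall>a\<in>S. \<forall>b\<in>S. a \<noteq> b \<longrightarrow> nbr E a \<noteq> nbr E b)"

definition leaf_swap :: "'n set set \<Rightarrow> 'n set \<Rightarrow> 'n \<Rightarrow> 'n" where
  "leaf_swap E S x = (if x \<in> S then nbr E x
      else if (\<exists>a\<in>S. nbr E a = x) then (THE a. a \<in> S \<and> nbr E a = x) else x)"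

definition swapped_tree :: "'n set set \<Rightarrow> 'n set \<Rightarrow> 'n set set" where
  "swapped_tree E S = (\<lambda>e. leaf_swap E S ` e) ` E"

definition tree_class :: "'n set set \<Rightarrow> 'n set set set" where
  "tree_class E = {swapped_tree E S | S. admissible_leaf_set E S}"

end

theory Submission
  imports Defs
begin

text \<open>
  Let \<open>\<Omega> = \<Sigma>\<^sup>-\<^sup>1\<close> be supported on a tree T. Cutting a vector down to one side of
  a vertex or an edge of T interacts with \<open>\<Omega>\<close> only across that vertex or edge; this
  gives \<open>\<Sigma>\<^sub>i\<^sub>j \<Sigma>\<^sub>k\<^sub>k = \<Sigma>\<^sub>i\<^sub>k \<Sigma>\<^sub>k\<^sub>j\<close> whenever k separates i from j, and shows that
  no entry of \<open>\<Sigma>\<close> vanishes. Hence for distinct i, j, k the ratio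
  \<open>\<Sigma>\<^sub>i\<^sub>k \<Sigma>\<^sub>k\<^sub>j / \<Sigma>\<^sub>i\<^sub>j\<close> is at most \<open>\<Sigma>\<^sub>k\<^sub>k\<close>, with equality exactly when k separates
  i from j (by induction, moving k one step towards i and using positive
  definiteness of the \<open>2\<times>2\<close> minor). For a leaf k with neighbour q the ratio
  factors through q, so its maximum over the pairs is \<open>\<Sigma>\<^sub>q\<^sub>k\<^sup>2 / \<Sigma>\<^sub>q\<^sub>q\<close>, attained
  exactly when q is one of i, j or separates them.

  These ratios involve only off-diagonal entries, which \<open>\<Sigma>\<^sup>*\<close> and \<open>\<Sigma>'\<close> share;
  as the maxima are attained, T* and T' have the same maximizing pairs at every
  vertex. Comparing the maximizers shows that a leaf of one tree that is not a
  leaf of the other is matched with its neighbour, a leaf of the other tree only,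
  and that exchanging all these pairs maps the edges of T* onto those of T'.
\<close>

section \<open>Positive definite matrices\<close>

lemma matrix_inv_mult:
  fixes A :: "'a::semiring_1^'n^'m"
  assumes "invertible A"
  shows "A ** matrix_inv A = mat 1" and "matrix_inv A ** A = mat 1"
  using someI_ex[OF assms[unfolded invertible_def]] unfolding matrix_inv_def by auto

lemma matrix_vector_mult_nth: "(A *v x) $ i = (\<Sum>j\<in>UNIV. A $ i $ j * x $ j)"
  by (simp add: matrix_vector_mult_def)

lemma matrix_vector_mult_axis_nth: "(A *v axis k c) $ i = A $ i $ k * (c::real)"
  unfolding matrix_vector_mult_def axis_def
  by (simp add: if_distrib[where f = "\<lambda>x. _ * x"] cong: if_cong)

lemma inner_axis_matrix_axis: "axis i a \<bullet> (A *v axis j b) = a * A $ i $ j * (b::real)"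
  by (simp add: inner_axis' matrix_vector_mult_axis_nth)

lemma pos_def_mat_sym: "pos_def_mat A \<Longrightarrow> A $ i $ j = A $ j $ i"
  unfolding pos_def_mat_def by (metis transpose_def vec_lambda_beta)

lemma pos_def_mat_diag_pos:
  assumes "pos_def_mat A"
  shows "A $ k $ k > 0"
proof -
  have "axis k 1 \<bullet> (A *v axis k 1) > 0"
    using assms unfolding pos_def_mat_def by (simp add: axis_eq_0_iff)
  then show ?thesis by (simp add: inner_axis_matrix_axis)
qed

lemma pos_def_mat_offdiag_sq_less:
  assumes pd: "pos_def_mat A" and "p \<noteq> k"
  shows "(A $ p $ k)\<^sup>2 < A $ p $ p * A $ k $ k"
proof -
  define a where "a = A $ k $ k"
  define b where "b = - A $ p $ k"
  define x where "x = axis p a + axis k b"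
  have a: "a > 0" unfolding a_def using pos_def_mat_diag_pos[OF pd] .
  have "x $ p = a" using \<open>p \<noteq> k\<close> by (simp add: x_def axis_def)
  then have "x \<noteq> 0" using a by auto
  then have "x \<bullet> (A *v x) > 0" using pd unfolding pos_def_mat_def by blast
  also have "x \<bullet> (A *v x) = a * (A $ p $ p * A $ k $ k - (A $ p $ k)\<^sup>2)"
    using pos_def_mat_sym[OF pd, of k p] unfolding x_def
    by (simp add: matrix_vector_right_distrib inner_add_left inner_add_right inner_axis_matrix_axis)
      (simp add: a_def b_def algebra_simps power2_eq_square)
  finally show ?thesis using a by (simp add: zero_less_mult_iff)
qed

lemma pos_def_mat_invertible:
  assumes "pos_def_mat A"
  shows "invertible A"
proof -
  have "A *v x = 0 \<Longrightarrow> x = 0" for x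
    using assms unfolding pos_def_mat_def by force
  then show ?thesis using matrix_left_invertible_ker invertible_left_inverse by blast
qed

lemma pos_def_mat_inv_sym:
  assumes pd: "pos_def_mat A"
  shows "matrix_inv A $ i $ j = matrix_inv A $ j $ i"
proof -
  let ?B = "matrix_inv A"
  note inv = matrix_inv_mult[OF pos_def_mat_invertible[OF pd]]
  have "A ** transpose ?B = mat 1"
    using arg_cong[OF inv(2), of transpose] pd
    by (simp add: matrix_transpose_mul transpose_mat pos_def_mat_def)
  then have "transpose ?B = ?B"
    by (metis inv(2) matrix_mul_assoc matrix_mul_lid matrix_mul_rid)
  then show ?thesis by (metis transpose_def vec_lambda_beta)
qed

lemma pos_def_mat_inv_mult_cancel:
  assumes "pos_def_mat A"
  shows "A *v (matrix_inv A *v x) = x" and "matrix_inv A *v (A *v x) = x"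
  using matrix_inv_mult[OF pos_def_mat_invertible[OF assms]]
  by (simp_all add: matrix_vector_mul_assoc)

section \<open>Separation in trees\<close>

definition reach_avoiding :: "'n set set \<Rightarrow> 'n \<Rightarrow> 'n \<Rightarrow> 'n \<Rightarrow> bool" where
  "reach_avoiding E k = (\<lambda>u v. adj E u v \<and> u \<noteq> k \<and> v \<noteq> k)\<^sup>*\<^sup>*"

definition reach_without_edge :: "'n set set \<Rightarrow> 'n \<Rightarrow> 'n \<Rightarrow> 'n \<Rightarrow> 'n \<Rightarrow> bool" where
  "reach_without_edge E a b = (\<lambda>u v. adj E u v \<and> {u, v} \<noteq> {a, b})\<^sup>*\<^sup>*"

definition separates :: "'n set set \<Rightarrow> 'n \<Rightarrow> 'n \<Rightarrow> 'n \<Rightarrow> bool" where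
  "separates E k i j \<longleftrightarrow> i \<noteq> k \<and> j \<noteq> k \<and> \<not> reach_avoiding E k i j"

lemma adj_commute: "adj E u v \<longleftrightarrow> adj E v u"
  unfolding adj_def by (auto simp: insert_commute)

lemma adj_irrefl: "\<not> adj E u u"
  unfolding adj_def by auto

lemma graph_edge_iff:
  assumes "is_graph E"
  shows "e \<in> E \<longleftrightarrow> (\<exists>x y. e = {x, y} \<and> adj E x y)"
proof
  assume "e \<in> E"
  then obtain x y where "e = {x, y}" "x \<noteq> y"
    using assms unfolding is_graph_def by (auto simp: card_2_iff)
  then show "\<exists>x y. e = {x, y} \<and> adj E x y" using \<open>e \<in> E\<close> unfolding adj_def by blast
qed (auto simp: adj_def)

lemma reach_avoiding_refl: "reach_avoiding E k x x"
  unfolding reach_avoiding_def by simp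

lemma reach_avoiding_sym: "reach_avoiding E k x y \<Longrightarrow> reach_avoiding E k y x"
  unfolding reach_avoiding_def
  by (rule sympD[OF symp_rtranclp]) (auto intro: sympI simp: adj_commute)

lemma reach_avoiding_trans:
  "reach_avoiding E k x y \<Longrightarrow> reach_avoiding E k y z \<Longrightarrow> reach_avoiding E k x z"
  unfolding reach_avoiding_def by simp

lemma reach_avoiding_step:
  "reach_avoiding E k i x \<Longrightarrow> adj E x y \<Longrightarrow> x \<noteq> k \<Longrightarrow> y \<noteq> k \<Longrightarrow> reach_avoiding E k i y"
  unfolding reach_avoiding_def by (simp add: rtranclp.rtrancl_into_rtrancl)

lemma reach_avoiding_edge: "adj E a b \<Longrightarrow> a \<noteq> k \<Longrightarrow> b \<noteq> k \<Longrightarrow> reach_avoiding E k a b"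
  using reach_avoiding_step[OF reach_avoiding_refl] .

lemma reach_avoiding_avoids: "reach_avoiding E k i x \<Longrightarrow> i \<noteq> k \<Longrightarrow> x \<noteq> k"
  unfolding reach_avoiding_def by (induction rule: rtranclp_induct) auto

lemma reach_avoiding_imp_without_edge:
  "reach_avoiding E k x y \<Longrightarrow> k \<in> {a, b} \<Longrightarrow> reach_without_edge E a b x y"
  unfolding reach_avoiding_def reach_without_edge_def
  by (erule rtranclp_mono[THEN predicate2D, rotated]) (auto simp: doubleton_eq_iff)

lemma reach_without_edge_sym:
  "reach_without_edge E a b x y \<Longrightarrow> reach_without_edge E a b y x"
  unfolding reach_without_edge_def
  by (rule sympD[OF symp_rtranclp]) (auto intro: sympI simp: adj_commute insert_commute)

lemma reach_without_edge_trans: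
  "reach_without_edge E a b x y \<Longrightarrow> reach_without_edge E a b y z \<Longrightarrow> reach_without_edge E a b x z"
  unfolding reach_without_edge_def by simp

lemma reach_without_edge_step:
  "reach_without_edge E a b i x \<Longrightarrow> adj E x y \<Longrightarrow> {x, y} \<noteq> {a, b} \<Longrightarrow> reach_without_edge E a b i y"
  unfolding reach_without_edge_def by (simp add: rtranclp.rtrancl_into_rtrancl)

lemma rtranclp_distinct_path:
  "r\<^sup>*\<^sup>* x y \<Longrightarrow> \<exists>vs. vs \<noteq> [] \<and> hd vs = x \<and> last vs = y \<and> distinct vs \<and> successively r vs"
proof (induction rule: rtranclp_induct)
  case base
  then show ?case by (intro exI[of _ "[x]"]) auto
next
  case (step y z)
  then obtain vs where vs: "vs \<noteq> []" "hd vs = x" "last vs = y" "distinct vs" "successively r vs"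
    by blast
  show ?case
  proof (cases "z \<in> set vs")
    case True
    then obtain as bs where vs_split: "vs = as @ z # bs" by (meson split_list)
    have "successively r (as @ [z])" "hd (as @ [z]) = x"
      using vs(2,5) unfolding vs_split
      by (auto simp: successively_append_iff successively_Cons hd_append split: if_splits)
    then show ?thesis using vs(4) vs_split by (intro exI[of _ "as @ [z]"]) auto
  next
    case False
    have "successively r (vs @ [z])" using vs step.hyps(2) by (simp add: successively_append_iff)
    then show ?thesis using vs False by (intro exI[of _ "vs @ [z]"]) auto
  qed
qed

lemma tree_connected: "is_tree E \<Longrightarrow> (adj E)\<^sup>*\<^sup>* x y"
  unfolding is_tree_def connected_graph_def by blast

lemma tree_edge_bridge:
  assumes tree: "is_tree E" and uv: "adj E u v"
  shows "\<not> reach_without_edge E u v u v"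
proof
  let ?r = "\<lambda>a b. adj E a b \<and> {a, b} \<noteq> {u, v}"
  assume "reach_without_edge E u v u v"
  then have "?r\<^sup>*\<^sup>* u v" unfolding reach_without_edge_def .
  from rtranclp_distinct_path[OF this] obtain vs
    where vs: "vs \<noteq> []" "hd vs = u" "last vs = v" "distinct vs" "successively ?r vs"
    by blast
  have "u \<noteq> v" using uv adj_irrefl by metis
  have "vs \<noteq> [x]" for x using vs(2,3) \<open>u \<noteq> v\<close> by auto
  moreover have "vs \<noteq> [x, y]" for x y using vs(2,3,5) by auto
  ultimately have "length vs \<ge> 3"
    using vs(1) by (cases vs; cases "tl vs"; cases "tl (tl vs)") auto
  have "has_cycle E"
    unfolding has_cycle_def
  proof (intro exI conjI allI impI)
    show "3 \<le> length vs" "distinct vs" by fact+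
    show "adj E (vs ! i) (vs ! Suc i)" if "Suc i < length vs" for i
      using successively_nth[OF vs(5) that] by blast
    show "adj E (last vs) (hd vs)" using vs(2,3) uv adj_commute by metis
  qed
  then show False using tree unfolding is_tree_def by blast
qed

lemma tree_edge_sides:
  assumes tree: "is_tree E" and uv: "adj E u v"
  shows "reach_without_edge E u v u x \<or> reach_without_edge E u v v x"
proof -
  have "(adj E)\<^sup>*\<^sup>* u x \<Longrightarrow> reach_without_edge E u v u x \<or> reach_without_edge E u v v x" for x
  proof (induction rule: rtranclp_induct)
    case base
    then show ?case unfolding reach_without_edge_def by simp
  next
    case (step y z)
    show ?case
    proof (cases "{y, z} = {u, v}")
      case True
      then have "z = u \<or> z = v" by (auto simp: doubleton_eq_iff)
      then show ?thesis unfolding reach_without_edge_def by auto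
    next
      case False
      then show ?thesis using step.IH reach_without_edge_step[OF _ step.hyps(2)] by blast
    qed
  qed
  then show ?thesis using tree_connected[OF tree] by blast
qed

lemma tree_neighbour_towards:
  assumes tree: "is_tree E" and ik: "i \<noteq> k"
  shows "\<exists>p. adj E p k \<and> reach_avoiding E k i p"
proof -
  have "(adj E)\<^sup>*\<^sup>* i y \<Longrightarrow> reach_avoiding E k i y \<or> (\<exists>p. adj E p k \<and> reach_avoiding E k i p)" for y
  proof (induction rule: rtranclp_induct)
    case base
    then show ?case by (simp add: reach_avoiding_refl)
  next
    case (step y z)
    show ?case
    proof (cases "\<exists>p. adj E p k \<and> reach_avoiding E k i p")
      case False
      then have y: "reach_avoiding E k i y" using step.IH by blast
      have "y \<noteq> k" using reach_avoiding_avoids[OF y ik] .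
      show ?thesis
      proof (cases "z = k")
        case True
        then show ?thesis using y step.hyps(2) by blast
      next
        case False
        then show ?thesis using reach_avoiding_step[OF y step.hyps(2) \<open>y \<noteq> k\<close>] by blast
      qed
    qed blast
  qed
  moreover have "\<not> reach_avoiding E k i k" using reach_avoiding_avoids[of E k i k] ik by blast
  ultimately show ?thesis using tree_connected[OF tree, of i k] by blast
qed

lemma separates_from_neighbour:
  assumes tree: "is_tree E" and pk: "adj E p k" and "reach_avoiding E k p x" "x \<noteq> p"
  shows "separates E p x k"
proof -
  have "p \<noteq> k" using pk adj_irrefl by metis
  have "\<not> reach_avoiding E p x k"
  proof
    assume "reach_avoiding E p x k"
    then have "reach_without_edge E p k x k" using reach_avoiding_imp_without_edge by fast
    moreover have "reach_without_edge E p k p x"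
      using \<open>reach_avoiding E k p x\<close> reach_avoiding_imp_without_edge by fast
    ultimately show False
      using tree_edge_bridge[OF tree pk] reach_without_edge_trans by metis
  qed
  then show ?thesis
    unfolding separates_def using assms(4) \<open>p \<noteq> k\<close> by auto
qed

lemma separates_neighbours:
  assumes tree: "is_tree E" and "adj E k x" "adj E k y" "x \<noteq> y"
  shows "separates E k x y"
proof -
  have "\<not> reach_avoiding E k x y"
  proof
    assume "reach_avoiding E k x y"
    then have "reach_without_edge E x k x y" using reach_avoiding_imp_without_edge by fast
    moreover have "{y, k} \<noteq> {x, k}" using \<open>x \<noteq> y\<close> by (auto simp: doubleton_eq_iff)
    moreover have "adj E y k" using \<open>adj E k y\<close> adj_commute by metis
    ultimately have "reach_without_edge E x k x k" using reach_without_edge_step by metis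
    moreover have "adj E x k" using \<open>adj E k x\<close> adj_commute by metis
    ultimately show False using tree_edge_bridge[OF tree] by blast
  qed
  then show ?thesis unfolding separates_def using assms adj_irrefl by metis
qed

lemma separates_across_edge:
  assumes tree: "is_tree E" and uv: "adj E u v" and "x \<noteq> u" "x \<noteq> v"
  shows "separates E u x v \<or> separates E v x u"
proof -
  have "u \<noteq> v" using uv adj_irrefl by metis
  have bridge: "\<not> reach_without_edge E u v u v" using tree_edge_bridge[OF tree uv] .
  from tree_edge_sides[OF tree uv, of x]
  have "\<not> reach_avoiding E u x v \<or> \<not> reach_avoiding E v x u"
  proof
    assume ux: "reach_without_edge E u v u x"
    show ?thesis
    proof (intro disjI1 notI)
      assume "reach_avoiding E u x v"
      then have "reach_without_edge E u v x v" using reach_avoiding_imp_without_edge by fast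
      then show False using ux bridge reach_without_edge_trans by metis
    qed
  next
    assume vx: "reach_without_edge E u v v x"
    show ?thesis
    proof (intro disjI2 notI)
      assume "reach_avoiding E v x u"
      then have "reach_without_edge E u v x u" using reach_avoiding_imp_without_edge by fast
      then show False using reach_without_edge_trans[OF vx] bridge reach_without_edge_sym by metis
    qed
  qed
  then show ?thesis unfolding separates_def using assms \<open>u \<noteq> v\<close> by auto
qed

lemma tree_adj_iff_no_separator:
  assumes tree: "is_tree E" and "x \<noteq> y"
  shows "adj E x y \<longleftrightarrow> (\<forall>k. \<not> separates E k x y)"
proof
  assume "adj E x y"
  then have "reach_avoiding E k x y" if "x \<noteq> k" "y \<noteq> k" for k
    using reach_avoiding_edge that by metis
  then show "\<forall>k. \<not> separates E k x y" unfolding separates_def by blast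
next
  assume no_sep: "\<forall>k. \<not> separates E k x y"
  show "adj E x y"
  proof (rule ccontr)
    assume "\<not> adj E x y"
    obtain p where p: "adj E p y" "reach_avoiding E y x p"
      using tree_neighbour_towards[OF tree \<open>x \<noteq> y\<close>] by blast
    then have "p \<noteq> x" using \<open>\<not> adj E x y\<close> by blast
    then have "separates E p x y"
      using separates_from_neighbour[OF tree p(1) reach_avoiding_sym[OF p(2)]] by blast
    then show False using no_sep by blast
  qed
qed

lemma component_avoiding_psubset:
  assumes "reach_avoiding E k i p" "i \<noteq> k" "separates E p i k" "i \<noteq> p"
  shows "{x. reach_avoiding E p i x} \<subset> {x. reach_avoiding E k i x}"
proof
  show "{x. reach_avoiding E p i x} \<subseteq> {x. reach_avoiding E k i x}"
  proof safe
    fix x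
    assume "reach_avoiding E p i x"
    then show "reach_avoiding E k i x"
      unfolding reach_avoiding_def[of E p]
    proof (induction rule: rtranclp_induct)
      case base
      show ?case by (rule reach_avoiding_refl)
    next
      case (step y z)
      have "reach_avoiding E p i z"
        using step unfolding reach_avoiding_def by (simp add: rtranclp.rtrancl_into_rtrancl)
      then have "z \<noteq> k" using assms(3) unfolding separates_def by blast
      then show ?case
        using reach_avoiding_step[OF step.IH step.hyps(2)[THEN conjunct1]]
          reach_avoiding_avoids[OF step.IH assms(2)] by blast
    qed
  qed
  show "{x. reach_avoiding E p i x} \<noteq> {x. reach_avoiding E k i x}"
    using assms(1,4) reach_avoiding_avoids[of E p i p] by blast
qed

lemma leaf_nbr_adj: "k \<in> leaves E \<Longrightarrow> adj E k (nbr E k)"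
  and leaf_adj_eq_nbr: "k \<in> leaves E \<Longrightarrow> adj E k u \<Longrightarrow> u = nbr E k"
proof -
  assume "k \<in> leaves E"
  then obtain w where w: "{u. adj E k u} = {w}"
    unfolding leaves_def by (auto simp: card_1_singleton_iff)
  then have "nbr E k = w"
    unfolding nbr_def by (intro the_equality) (auto simp: set_eq_iff)
  then show "adj E k (nbr E k)" "adj E k u \<Longrightarrow> u = nbr E k" using w by auto
qed

lemma separates_not_leaf:
  assumes tree: "is_tree E" and "separates E k i j"
  shows "k \<notin> leaves E"
proof
  assume leaf: "k \<in> leaves E"
  have "i \<noteq> k" "j \<noteq> k" using assms(2) unfolding separates_def by auto
  obtain p q where p: "adj E p k" "reach_avoiding E k i p" and q: "adj E q k" "reach_avoiding E k j q"
    using tree_neighbour_towards[OF tree \<open>i \<noteq> k\<close>] tree_neighbour_towards[OF tree \<open>j \<noteq> k\<close>]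
    by blast
  have "p = nbr E k" "q = nbr E k"
    using leaf_adj_eq_nbr[OF leaf] p(1) q(1) adj_commute by metis+
  then have "reach_avoiding E k i j"
    using p(2) reach_avoiding_sym[OF q(2)] reach_avoiding_trans by metis
  then show False using assms(2) unfolding separates_def by blast
qed

lemma not_leaf_two_neighbours:
  assumes tree: "is_tree E" and "k \<notin> leaves E" and "x \<noteq> k"
  shows "\<exists>a b. a \<noteq> b \<and> adj E k a \<and> adj E k b"
proof -
  obtain p where "adj E p k" using tree_neighbour_towards[OF tree \<open>x \<noteq> k\<close>] by blast
  then have "adj E k p" using adj_commute by metis
  moreover have "{u. adj E k u} \<noteq> {p}" using \<open>k \<notin> leaves E\<close> unfolding leaves_def by auto
  ultimately obtain q where "adj E k q" "q \<noteq> p" by blast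
  then show ?thesis using \<open>adj E k p\<close> by blast
qed

section \<open>Covariances with tree-structured inverse\<close>

lemma adj_ci_graph:
  assumes "pos_def_mat S"
  shows "adj (ci_graph S) u v \<longleftrightarrow> u \<noteq> v \<and> matrix_inv S $ u $ v \<noteq> 0"
proof
  assume "adj (ci_graph S) u v"
  then obtain i j where "{u, v} = {i, j}" "i \<noteq> j" "matrix_inv S $ i $ j \<noteq> 0" "u \<noteq> v"
    unfolding adj_def ci_graph_def by blast
  then show "u \<noteq> v \<and> matrix_inv S $ u $ v \<noteq> 0"
    using pos_def_mat_inv_sym[OF assms, of i j] by (auto simp: doubleton_eq_iff)
next
  assume "u \<noteq> v \<and> matrix_inv S $ u $ v \<noteq> 0"
  then show "adj (ci_graph S) u v" unfolding adj_def ci_graph_def by blast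
qed

lemma inv_mult_restriction:
  fixes S :: "real^'n::finite^'n" and y :: "real^'n"
  assumes pd: "pos_def_mat S" and "b \<notin> C"
    and boundary: "\<forall>v\<in>C. {u. adj (ci_graph S) v u} \<subseteq> insert b C"
  shows inv_mult_restriction_inside:
      "v \<in> C \<Longrightarrow> (matrix_inv S *v (\<chi> u. if u \<in> C then y $ u else 0)) $ v
                  = (matrix_inv S *v y) $ v - matrix_inv S $ v $ b * y $ b"
    and inv_mult_restriction_outside:
      "v \<notin> C \<Longrightarrow> v \<noteq> b \<Longrightarrow> (matrix_inv S *v (\<chi> u. if u \<in> C then y $ u else 0)) $ v = 0"
proof -
  let ?O = "matrix_inv S"
  let ?z = "\<chi> u. if u \<in> C then y $ u else 0"
  have cut: "?O $ v $ u = 0" if "v \<in> C" "u \<notin> C" "u \<noteq> b" for v u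
    using boundary that adj_ci_graph[OF pd] by blast
  show "(?O *v ?z) $ v = (?O *v y) $ v - ?O $ v $ b * y $ b" if v: "v \<in> C"
  proof -
    have pointwise: "?O $ v $ u * (if u \<in> C then y $ u else 0)
        = ?O $ v $ u * y $ u - (if u = b then ?O $ v $ b * y $ b else 0)" for u
      using cut[OF v, of u] \<open>b \<notin> C\<close> by auto
    show ?thesis
      unfolding matrix_vector_mult_nth vec_lambda_beta pointwise by (simp add: sum_subtractf)
  qed
  show "(?O *v ?z) $ v = 0" if "v \<notin> C" "v \<noteq> b"
  proof -
    have pointwise: "?O $ v $ u * (if u \<in> C then y $ u else 0) = 0" for u
      using cut[of u v] that pos_def_mat_inv_sym[OF pd, of v u] by auto
    show ?thesis
      unfolding matrix_vector_mult_nth vec_lambda_beta pointwise by simp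
  qed
qed

text \<open>The covariance version of conditional independence given a separator k: the
  vector \<open>y = S(e\<^sub>j - t e\<^sub>k)\<close> with \<open>y\<^sub>k = 0\<close>, cut down to the component of i,
  is mapped by the precision matrix to a multiple of \<open>e\<^sub>k\<close>; evaluating at k shows
  that the multiple, hence \<open>y\<^sub>i\<close>, vanishes.\<close>
lemma separator_cov_factorization:
  assumes pd: "pos_def_mat S" and sep: "separates (ci_graph S) k i j"
  shows "S $ i $ j * S $ k $ k = S $ i $ k * S $ k $ j"
proof -
  let ?E = "ci_graph S"
  define C where "C = {x. reach_avoiding ?E k i x}"
  define t where "t = S $ k $ j / S $ k $ k"
  define x where "x = axis j 1 - axis k t"
  define y where "y = S *v x"
  define z where "z = (\<chi> u. if u \<in> C then y $ u else 0)"
  define w where "w = matrix_inv S *v z"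
  have "i \<noteq> k" and "j \<notin> C"
    using sep unfolding separates_def C_def by auto
  have "k \<notin> C" unfolding C_def using reach_avoiding_avoids[OF _ \<open>i \<noteq> k\<close>] by blast
  have "i \<in> C" unfolding C_def by (simp add: reach_avoiding_refl)
  have kk: "S $ k $ k > 0" using pos_def_mat_diag_pos[OF pd] .
  have y_nth: "y $ u = S $ u $ j - S $ u $ k * t" for u
    unfolding y_def x_def by (simp add: matrix_vector_mult_diff_distrib matrix_vector_mult_axis_nth)
  have "y $ k = 0" using kk by (simp add: y_nth t_def)
  have boundary: "\<forall>v\<in>C. {u. adj ?E v u} \<subseteq> insert k C"
  proof (intro ballI subsetI)
    fix v u
    assume "v \<in> C" "u \<in> {u. adj ?E v u}"
    have "reach_avoiding ?E k i v" using \<open>v \<in> C\<close> unfolding C_def by simp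
    then have "reach_avoiding ?E k i u" if "u \<noteq> k"
      using reach_avoiding_step \<open>u \<in> {u. adj ?E v u}\<close> reach_avoiding_avoids \<open>i \<noteq> k\<close> that
      by (metis mem_Collect_eq)
    then show "u \<in> insert k C" unfolding C_def by blast
  qed
  have w_off_k: "w $ v = 0" if "v \<noteq> k" for v
  proof (cases "v \<in> C")
    case True
    have "matrix_inv S *v y = x" unfolding y_def by (rule pos_def_mat_inv_mult_cancel(2)[OF pd])
    moreover have "v \<noteq> j" using True \<open>j \<notin> C\<close> by blast
    ultimately show ?thesis
      using inv_mult_restriction_inside[OF pd \<open>k \<notin> C\<close> boundary True, where y = y] \<open>y $ k = 0\<close> that
      unfolding w_def z_def x_def by (simp add: axis_def)
  next
    case False
    show ?thesis
      using inv_mult_restriction_outside[OF pd \<open>k \<notin> C\<close> boundary False that, where y = y]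
      unfolding w_def z_def .
  qed
  have z_nth: "z $ u = S $ u $ k * w $ k" for u
  proof -
    have "w = axis k (w $ k)" using w_off_k by (simp add: vec_eq_iff axis_def)
    moreover have "S *v w = z" unfolding w_def by (rule pos_def_mat_inv_mult_cancel(1)[OF pd])
    ultimately have "z = S *v axis k (w $ k)" by simp
    then show ?thesis by (simp add: matrix_vector_mult_axis_nth)
  qed
  have "w $ k = 0" using z_nth[of k] \<open>k \<notin> C\<close> kk unfolding z_def by simp
  then have "y $ i = 0" using z_nth[of i] \<open>i \<in> C\<close> unfolding z_def by simp
  then show ?thesis using kk by (simp add: y_nth t_def field_simps)
qed

text \<open>Same argument with the edge uv in the role of the separator: if \<open>S\<^sub>u\<^sub>v = 0\<close>,
  the column \<open>S e\<^sub>v\<close> cut down to the side of u would force the precision entry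
  of the edge to vanish.\<close>
lemma tree_cov_edge_nonzero:
  assumes pd: "pos_def_mat S" and tree: "is_tree (ci_graph S)" and uv: "adj (ci_graph S) u v"
  shows "S $ u $ v \<noteq> 0"
proof
  assume "S $ u $ v = 0"
  let ?E = "ci_graph S"
  let ?O = "matrix_inv S"
  define C where "C = {x. reach_without_edge ?E u v u x}"
  define y where "y = S *v axis v 1"
  define z where "z = (\<chi> x. if x \<in> C then y $ x else 0)"
  define w where "w = ?O *v z"
  have "u \<noteq> v" using uv adj_irrefl by metis
  have "v \<notin> C" unfolding C_def using tree_edge_bridge[OF tree uv] by simp
  have "u \<in> C" unfolding C_def reach_without_edge_def by simp
  have closed: "x \<in> C" if "a \<in> C" "adj ?E a x" "{a, x} \<noteq> {u, v}" for a x
    using that reach_without_edge_step unfolding C_def by fast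
  have boundary: "\<forall>a\<in>C. {x. adj ?E a x} \<subseteq> insert v C"
  proof (intro ballI subsetI)
    fix a x
    assume "a \<in> C" "x \<in> {x. adj ?E a x}"
    show "x \<in> insert v C"
    proof (cases "{a, x} = {u, v}")
      case True
      then show ?thesis using \<open>a \<in> C\<close> \<open>v \<notin> C\<close> by (auto simp: doubleton_eq_iff)
    qed (use closed \<open>a \<in> C\<close> \<open>x \<in> {x. adj ?E a x}\<close> in blast)
  qed
  have Oy: "?O *v y = axis v 1" unfolding y_def by (rule pos_def_mat_inv_mult_cancel(2)[OF pd])
  have "y $ v = S $ v $ v" unfolding y_def by (simp add: matrix_vector_mult_axis_nth)
  have w_inside: "w $ a = - ?O $ a $ v * S $ v $ v" if "a \<in> C" for a
  proof -
    have "a \<noteq> v" using that \<open>v \<notin> C\<close> by blast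
    then show ?thesis
      using inv_mult_restriction_inside[OF pd \<open>v \<notin> C\<close> boundary that, where y = y] \<open>y $ v = S $ v $ v\<close>
      unfolding w_def z_def Oy by (simp add: axis_def)
  qed
  have w_other: "w $ a = 0" if "a \<noteq> u" "a \<noteq> v" for a
  proof (cases "a \<in> C")
    case True
    have "\<not> adj ?E a v" using closed[OF True] \<open>v \<notin> C\<close> that by (auto simp: doubleton_eq_iff)
    then show ?thesis using w_inside[OF True] adj_ci_graph[OF pd] that by simp
  next
    case False
    show ?thesis
      using inv_mult_restriction_outside[OF pd \<open>v \<notin> C\<close> boundary False that(2), where y = y]
      unfolding w_def z_def .
  qed
  have "w = axis u (w $ u) + axis v (w $ v)"
    using w_other \<open>u \<noteq> v\<close> by (auto simp: vec_eq_iff axis_def)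
  moreover have "S *v w = z" unfolding w_def by (rule pos_def_mat_inv_mult_cancel(1)[OF pd])
  ultimately have "z $ u = S $ u $ u * w $ u + S $ u $ v * w $ v"
    by (metis matrix_vector_right_distrib matrix_vector_mult_axis_nth vector_add_component)
  moreover have "z $ u = S $ u $ v"
    using \<open>u \<in> C\<close> unfolding z_def y_def by (simp add: matrix_vector_mult_axis_nth)
  ultimately have "w $ u = 0" using \<open>S $ u $ v = 0\<close> pos_def_mat_diag_pos[OF pd, of u] by simp
  then have "?O $ u $ v * S $ v $ v = 0" using w_inside[OF \<open>u \<in> C\<close>] by simp
  then show False
    using uv adj_ci_graph[OF pd] pos_def_mat_diag_pos[OF pd, of v] by simp
qed

lemma tree_cov_nonzero:
  assumes pd: "pos_def_mat S" and tree: "is_tree (ci_graph S)"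
  shows "S $ i $ j \<noteq> 0"
proof -
  let ?E = "ci_graph S"
  have "(adj ?E)\<^sup>*\<^sup>* i y \<Longrightarrow> S $ i $ y \<noteq> 0" for y
  proof (induction rule: rtranclp_induct)
    case base
    then show ?case using pos_def_mat_diag_pos[OF pd, of i] by simp
  next
    case (step y z)
    have yz: "S $ y $ z \<noteq> 0" using tree_cov_edge_nonzero[OF pd tree step.hyps(2)] .
    show ?case
    proof (cases "i = y \<or> i = z")
      case True
      then show ?thesis
        using yz pos_def_mat_diag_pos[OF pd, of z] by (auto simp del: vec_lambda_beta)
    next
      case False
      then consider "separates ?E y i z" | "separates ?E z i y"
        using separates_across_edge[OF tree step.hyps(2)] by metis
      then show ?thesis
      proof cases
        case 1
        then show ?thesis
          using separator_cov_factorization[OF pd] step.IH yz pos_def_mat_diag_pos[OF pd, of y]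
          by (metis mult_eq_0_iff less_irrefl)
      next
        case 2
        then show ?thesis
          using separator_cov_factorization[OF pd] step.IH pos_def_mat_diag_pos[OF pd, of z]
          by (metis mult_eq_0_iff less_irrefl)
      qed
    qed
  qed
  then show ?thesis using tree_connected[OF tree] by blast
qed

definition cov_ratio :: "real^'n^'n \<Rightarrow> 'n \<Rightarrow> 'n \<Rightarrow> 'n \<Rightarrow> real" where
  "cov_ratio S k i j = S $ i $ k * S $ k $ j / S $ i $ j"

lemma cov_ratio_endpoint:
  assumes "pos_def_mat S" "S $ i $ j \<noteq> 0" "k \<in> {i, j}"
  shows "cov_ratio S k i j = S $ k $ k"
  using assms pos_def_mat_sym[OF assms(1), of i j] unfolding cov_ratio_def by auto

lemma cov_ratio_separator:
  assumes "pos_def_mat S" "S $ i $ j \<noteq> 0" "separates (ci_graph S) k i j"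
  shows "cov_ratio S k i j = S $ k $ k"
  using separator_cov_factorization[OF assms(1,3)] assms(2) unfolding cov_ratio_def
  by (simp add: field_simps)

lemma cov_ratio_transfer:
  assumes pd: "pos_def_mat S"
    and "S $ i $ k * S $ p $ p = S $ i $ p * S $ p $ k" "S $ j $ k * S $ p $ p = S $ j $ p * S $ p $ k"
  shows "cov_ratio S k i j = cov_ratio S p i j * (S $ p $ k / S $ p $ p)\<^sup>2"
proof -
  have "S $ p $ p \<noteq> 0" using pos_def_mat_diag_pos[OF pd, of p] by simp
  then have "S $ i $ k = S $ i $ p * S $ p $ k / S $ p $ p" "S $ k $ j = S $ p $ j * S $ p $ k / S $ p $ p"
    using assms(2,3) pos_def_mat_sym[OF pd, of k j] pos_def_mat_sym[OF pd, of j p]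
    by (simp_all add: field_simps)
  then show ?thesis unfolding cov_ratio_def by (simp add: power2_eq_square ac_simps)
qed

lemma neighbour_cov_factorization:
  assumes pd: "pos_def_mat S" and tree: "is_tree (ci_graph S)"
    and pk: "adj (ci_graph S) p k" and "reach_avoiding (ci_graph S) k p x"
  shows "S $ x $ k * S $ p $ p = S $ x $ p * S $ p $ k"
proof (cases "x = p")
  case False
  then have "separates (ci_graph S) p x k" using separates_from_neighbour[OF tree pk assms(4)] by blast
  then show ?thesis using separator_cov_factorization[OF pd] by blast
qed simp

lemma non_separator_cov_ratio_less:
  assumes pd: "pos_def_mat S" and tree: "is_tree (ci_graph S)"
  shows "i \<noteq> j \<Longrightarrow> k \<notin> {i, j} \<Longrightarrow> \<not> separates (ci_graph S) k i j \<Longrightarrow> cov_ratio S k i j < S $ k $ k"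
proof (induction "card {x. reach_avoiding (ci_graph S) k i x}" arbitrary: k rule: less_induct)
  case less
  let ?E = "ci_graph S"
  have "i \<noteq> k" and ij: "reach_avoiding ?E k i j"
    using less.prems unfolding separates_def by auto
  obtain p where p: "adj ?E p k" "reach_avoiding ?E k i p"
    using tree_neighbour_towards[OF tree \<open>i \<noteq> k\<close>] by blast
  have "p \<noteq> k" using p(1) adj_irrefl by metis
  have pi: "reach_avoiding ?E k p i" using reach_avoiding_sym[OF p(2)] .
  have pj: "reach_avoiding ?E k p j" using reach_avoiding_trans[OF pi ij] .
  have "cov_ratio S p i j \<le> S $ p $ p"
  proof -
    consider "p \<in> {i, j}" | "separates ?E p i j" | "p \<notin> {i, j}" "\<not> separates ?E p i j" by blast
    then show ?thesis
    proof cases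
      case 1
      then show ?thesis using cov_ratio_endpoint[OF pd tree_cov_nonzero[OF pd tree]] by simp
    next
      case 2
      then show ?thesis using cov_ratio_separator[OF pd tree_cov_nonzero[OF pd tree]] by simp
    next
      case 3
      then have "separates ?E p i k" using separates_from_neighbour[OF tree p(1) pi] by blast
      then have "{x. reach_avoiding ?E p i x} \<subset> {x. reach_avoiding ?E k i x}"
        using component_avoiding_psubset[OF p(2) \<open>i \<noteq> k\<close>] 3 by blast
      then have "card {x. reach_avoiding ?E p i x} < card {x. reach_avoiding ?E k i x}"
        by (simp add: psubset_card_mono)
      then show ?thesis using less.hyps less.prems(1) 3 by fastforce
    qed
  qed
  have spp: "S $ p $ p > 0" using pos_def_mat_diag_pos[OF pd] .
  have "cov_ratio S k i j = cov_ratio S p i j * (S $ p $ k / S $ p $ p)\<^sup>2"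
    using cov_ratio_transfer[OF pd] neighbour_cov_factorization[OF pd tree p(1)] pi pj by blast
  also have "\<dots> \<le> S $ p $ p * (S $ p $ k / S $ p $ p)\<^sup>2"
    using \<open>cov_ratio S p i j \<le> S $ p $ p\<close> by (simp add: mult_right_mono)
  also have "\<dots> = (S $ p $ k)\<^sup>2 / S $ p $ p"
    using spp by (simp add: power2_eq_square)
  also have "\<dots> < S $ k $ k"
    using pos_def_mat_offdiag_sq_less[OF pd \<open>p \<noteq> k\<close>] spp by (simp add: divide_less_eq mult.commute)
  finally show ?case .
qed

lemma cov_ratio_le_diag:
  assumes pd: "pos_def_mat S" and tree: "is_tree (ci_graph S)" and "i \<noteq> j"
  shows "cov_ratio S k i j \<le> S $ k $ k"
    and "cov_ratio S k i j = S $ k $ k \<longleftrightarrow> k \<in> {i, j} \<or> separates (ci_graph S) k i j"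
proof -
  have "S $ i $ j \<noteq> 0" using tree_cov_nonzero[OF pd tree] .
  then have attained: "cov_ratio S k i j = S $ k $ k" if "k \<in> {i, j} \<or> separates (ci_graph S) k i j"
    using that cov_ratio_endpoint[OF pd] cov_ratio_separator[OF pd] by blast
  have strict: "cov_ratio S k i j < S $ k $ k" if "\<not> (k \<in> {i, j} \<or> separates (ci_graph S) k i j)"
    using that non_separator_cov_ratio_less[OF pd tree \<open>i \<noteq> j\<close>] by blast
  show "cov_ratio S k i j \<le> S $ k $ k" using attained strict by force
  show "cov_ratio S k i j = S $ k $ k \<longleftrightarrow> k \<in> {i, j} \<or> separates (ci_graph S) k i j"
    using attained strict by force
qed

definition pivot :: "'n set set \<Rightarrow> 'n \<Rightarrow> 'n" where
  "pivot E k = (if k \<in> leaves E then nbr E k else k)"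

text \<open>For a vertex k that is not a leaf the pivot is k itself, and \<open>ratio_max\<close> is
  just \<open>S\<^sub>k\<^sub>k\<close>.\<close>
definition ratio_max :: "real^'n^'n \<Rightarrow> 'n set set \<Rightarrow> 'n \<Rightarrow> real" where
  "ratio_max S E k = (S $ pivot E k $ k)\<^sup>2 / S $ pivot E k $ pivot E k"

definition ratio_maximizer :: "'n set set \<Rightarrow> 'n \<Rightarrow> 'n \<Rightarrow> 'n \<Rightarrow> bool" where
  "ratio_maximizer E k i j \<longleftrightarrow> pivot E k \<in> {i, j} \<or> separates E (pivot E k) i j"

definition same_maximizers :: "'n set set \<Rightarrow> 'n set set \<Rightarrow> bool" where
  "same_maximizers E1 E2 \<longleftrightarrow> (\<forall>k i j. i \<noteq> j \<longrightarrow> k \<notin> {i, j} \<longrightarrow>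
      (ratio_maximizer E1 k i j \<longleftrightarrow> ratio_maximizer E2 k i j))"

lemma pivot_adj: "k \<in> leaves E \<Longrightarrow> adj E k (pivot E k)"
  unfolding pivot_def by (simp add: leaf_nbr_adj)

lemma pivot_cov_factorization:
  assumes pd: "pos_def_mat S" and tree: "is_tree (ci_graph S)"
    and p: "p = pivot (ci_graph S) k" and "x \<noteq> k"
  shows "S $ x $ k * S $ p $ p = S $ x $ p * S $ p $ k"
proof (cases "k \<in> leaves (ci_graph S)")
  case True
  obtain q where q: "adj (ci_graph S) q k" "reach_avoiding (ci_graph S) k x q"
    using tree_neighbour_towards[OF tree \<open>x \<noteq> k\<close>] by blast
  have "adj (ci_graph S) k q" using q(1) adj_commute by metis
  then have "q = p" using leaf_adj_eq_nbr[OF True] True unfolding p pivot_def by simp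
  then show ?thesis
    using neighbour_cov_factorization[OF pd tree q(1) reach_avoiding_sym[OF q(2)]] by simp
next
  case False
  then show ?thesis unfolding p pivot_def by simp
qed

text \<open>Through the pivot p of k, the ratio at k is the ratio at p rescaled by the
  positive factor \<open>(S\<^sub>p\<^sub>k / S\<^sub>p\<^sub>p)\<^sup>2\<close>, which turns the bound \<open>S\<^sub>p\<^sub>p\<close> into \<open>ratio_max\<close>.\<close>
lemma cov_ratio_max:
  assumes pd: "pos_def_mat S" and tree: "is_tree (ci_graph S)" and "i \<noteq> j" "k \<notin> {i, j}"
  shows "cov_ratio S k i j \<le> ratio_max S (ci_graph S) k"
    and "cov_ratio S k i j = ratio_max S (ci_graph S) k \<longleftrightarrow> ratio_maximizer (ci_graph S) k i j"
proof -
  define p where "p = pivot (ci_graph S) k"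
  define c where "c = (S $ p $ k / S $ p $ p)\<^sup>2"
  have spp: "S $ p $ p > 0" using pos_def_mat_diag_pos[OF pd] .
  have "c > 0" unfolding c_def using tree_cov_nonzero[OF pd tree, of p k] spp by simp
  have "cov_ratio S k i j = cov_ratio S p i j * c"
    unfolding c_def using assms(4)
    by (intro cov_ratio_transfer[OF pd] pivot_cov_factorization[OF pd tree p_def]) auto
  moreover have "ratio_max S (ci_graph S) k = S $ p $ p * c"
    unfolding ratio_max_def c_def p_def[symmetric] using spp by (simp add: power2_eq_square)
  ultimately show "cov_ratio S k i j \<le> ratio_max S (ci_graph S) k"
    and "cov_ratio S k i j = ratio_max S (ci_graph S) k \<longleftrightarrow> ratio_maximizer (ci_graph S) k i j"
    using cov_ratio_le_diag[OF pd tree \<open>i \<noteq> j\<close>, of p] \<open>c > 0\<close>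
    unfolding ratio_maximizer_def p_def[symmetric] by simp_all
qed

lemma ratio_maximizer_exists:
  fixes E :: "'n set set" and a b c :: 'n
  assumes tree: "is_tree E" and "distinct [a, b, c]"
  shows "\<exists>i j. i \<noteq> j \<and> k \<notin> {i, j} \<and> ratio_maximizer E k i j"
proof (cases "k \<in> leaves E")
  case True
  have "pivot E k \<noteq> k" using pivot_adj[OF True] adj_irrefl by metis
  have "\<exists>j\<in>{a, b, c}. j \<notin> {pivot E k, k}" using assms(2) by auto
  then obtain j where "j \<notin> {pivot E k, k}" by blast
  then have "pivot E k \<noteq> j \<and> k \<notin> {pivot E k, j} \<and> ratio_maximizer E k (pivot E k) j"
    using \<open>pivot E k \<noteq> k\<close> unfolding ratio_maximizer_def by auto
  then show ?thesis by blast
next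
  case False
  have "\<exists>x\<in>{a, b}. x \<noteq> k" using assms(2) by auto
  then obtain x where "x \<noteq> k" by blast
  then obtain u v where uv: "u \<noteq> v" "adj E k u" "adj E k v"
    using not_leaf_two_neighbours[OF tree False] by blast
  then have "k \<notin> {u, v}" using adj_irrefl by (metis insert_iff singletonD)
  moreover have "ratio_maximizer E k u v"
    using separates_neighbours[OF tree uv(2,3,1)] False unfolding ratio_maximizer_def pivot_def by simp
  ultimately show ?thesis using \<open>u \<noteq> v\<close> by blast
qed

lemma same_maximizers_of_offdiag_eq:
  fixes S1 S2 :: "real^'n::finite^'n"
  assumes pd1: "pos_def_mat S1" and tree1: "is_tree (ci_graph S1)"
    and pd2: "pos_def_mat S2" and tree2: "is_tree (ci_graph S2)"
    and offdiag: "\<And>a b. a \<noteq> b \<Longrightarrow> S1 $ a $ b = S2 $ a $ b"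
  shows "same_maximizers (ci_graph S1) (ci_graph S2)"
  unfolding same_maximizers_def
proof (intro allI impI)
  fix k i j :: 'n
  assume ij: "i \<noteq> j" "k \<notin> {i, j}"
  have ratio_eq: "cov_ratio S1 k x y = cov_ratio S2 k x y" if "x \<noteq> y" "k \<notin> {x, y}" for x y
    unfolding cov_ratio_def using offdiag that by auto
  have "distinct [i, j, k]" using ij by auto
  obtain x1 y1 where 1: "x1 \<noteq> y1" "k \<notin> {x1, y1}" "ratio_maximizer (ci_graph S1) k x1 y1"
    using ratio_maximizer_exists[OF tree1 \<open>distinct [i, j, k]\<close>] by blast
  obtain x2 y2 where 2: "x2 \<noteq> y2" "k \<notin> {x2, y2}" "ratio_maximizer (ci_graph S2) k x2 y2"
    using ratio_maximizer_exists[OF tree2 \<open>distinct [i, j, k]\<close>] by blast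
  have "ratio_max S1 (ci_graph S1) k = ratio_max S2 (ci_graph S2) k"
  proof (rule order.antisym)
    have "ratio_max S1 (ci_graph S1) k = cov_ratio S2 k x1 y1"
      using cov_ratio_max(2)[OF pd1 tree1 1(1,2)] 1(3) ratio_eq[OF 1(1,2)] by simp
    then show "ratio_max S1 (ci_graph S1) k \<le> ratio_max S2 (ci_graph S2) k"
      using cov_ratio_max(1)[OF pd2 tree2 1(1,2)] by simp
    have "ratio_max S2 (ci_graph S2) k = cov_ratio S1 k x2 y2"
      using cov_ratio_max(2)[OF pd2 tree2 2(1,2)] 2(3) ratio_eq[OF 2(1,2)] by simp
    then show "ratio_max S2 (ci_graph S2) k \<le> ratio_max S1 (ci_graph S1) k"
      using cov_ratio_max(1)[OF pd1 tree1 2(1,2)] by simp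
  qed
  then show "ratio_maximizer (ci_graph S1) k i j \<longleftrightarrow> ratio_maximizer (ci_graph S2) k i j"
    using cov_ratio_max(2)[OF pd1 tree1 ij] cov_ratio_max(2)[OF pd2 tree2 ij] ratio_eq[OF ij] by simp
qed

section \<open>Trees with the same ratio maximizers\<close>

lemma same_maximizersD:
  "same_maximizers E1 E2 \<Longrightarrow> i \<noteq> j \<Longrightarrow> k \<notin> {i, j} \<Longrightarrow>
    ratio_maximizer E1 k i j \<longleftrightarrow> ratio_maximizer E2 k i j"
  unfolding same_maximizers_def by simp

lemma same_maximizers_sym: "same_maximizers E1 E2 \<Longrightarrow> same_maximizers E2 E1"
  unfolding same_maximizers_def by simp

text \<open>A vertex k that is a leaf of E2 only: the pairs (nbr E2 k, j) maximize the ratio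
  at k for E2, so k separates nbr E2 k from every other vertex in E1.\<close>
lemma leaf_partner:
  assumes tree1: "is_tree E1" and same: "same_maximizers E1 E2"
    and "k \<notin> leaves E1" and leaf2: "k \<in> leaves E2"
  shows "nbr E2 k \<in> leaves E1 \<and> nbr E1 (nbr E2 k) = k"
proof -
  define q where "q = nbr E2 k"
  have "q \<noteq> k" using leaf_nbr_adj[OF leaf2] adj_irrefl unfolding q_def by metis
  have sep: "separates E1 k q j" if "j \<notin> {q, k}" for j
  proof -
    have "ratio_maximizer E2 k q j" using leaf2 unfolding ratio_maximizer_def pivot_def q_def by simp
    moreover have "q \<noteq> j" "k \<notin> {q, j}" using that \<open>q \<noteq> k\<close> by auto
    ultimately have "ratio_maximizer E1 k q j" using same_maximizersD[OF same] by blast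
    then show ?thesis
      using \<open>k \<notin> leaves E1\<close> \<open>k \<notin> {q, j}\<close> unfolding ratio_maximizer_def pivot_def by simp
  qed
  have only_k: "x = k" if "adj E1 q x" for x
  proof (rule ccontr)
    assume "x \<noteq> k"
    moreover have "x \<noteq> q" using that adj_irrefl by metis
    ultimately have "separates E1 k q x" using sep by blast
    moreover have "reach_avoiding E1 k q x" using reach_avoiding_edge[OF that \<open>q \<noteq> k\<close> \<open>x \<noteq> k\<close>] .
    ultimately show False unfolding separates_def by blast
  qed
  obtain p where "adj E1 p q" using tree_neighbour_towards[OF tree1 \<open>q \<noteq> k\<close>[symmetric]] by blast
  then have "adj E1 q p" using adj_commute by metis
  then have "adj E1 q k" using only_k by simp
  then have "{u. adj E1 q u} = {k}" using only_k by blast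
  then have "q \<in> leaves E1" unfolding leaves_def by simp
  moreover have "nbr E1 q = k" using leaf_adj_eq_nbr[OF \<open>q \<in> leaves E1\<close> \<open>adj E1 q k\<close>] by simp
  ultimately show ?thesis unfolding q_def by simp
qed

lemma leaf_nbr_not_leaf:
  fixes E :: "'n set set" and a b c :: 'n
  assumes tree: "is_tree E" and "distinct [a, b, c]" and leaf: "k \<in> leaves E"
  shows "nbr E k \<notin> leaves E"
proof
  define q where "q = nbr E k"
  assume "nbr E k \<in> leaves E"
  then have leaf_q: "q \<in> leaves E" unfolding q_def .
  have "adj E k q" using leaf_nbr_adj[OF leaf] unfolding q_def .
  then have "q \<noteq> k" and "nbr E q = k"
    using adj_irrefl leaf_adj_eq_nbr[OF leaf_q] adj_commute by metis+
  have "\<exists>x\<in>{a, b, c}. x \<notin> {q, k}" using assms(2) by auto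
  then obtain x where "x \<noteq> q" "x \<noteq> k" by blast
  obtain p where p: "adj E p k" "reach_avoiding E k x p"
    using tree_neighbour_towards[OF tree \<open>x \<noteq> k\<close>] by blast
  have "adj E k p" using p(1) adj_commute by metis
  then have "p = q" using leaf_adj_eq_nbr[OF leaf] unfolding q_def by simp
  then have "separates E q x k"
    using separates_from_neighbour[OF tree p(1) reach_avoiding_sym[OF p(2)]] \<open>x \<noteq> q\<close> by simp
  obtain p' where p': "adj E p' q" "reach_avoiding E q x p'"
    using tree_neighbour_towards[OF tree \<open>x \<noteq> q\<close>] by blast
  have "adj E q p'" using p'(1) adj_commute by metis
  then have "p' = k" using leaf_adj_eq_nbr[OF leaf_q] \<open>nbr E q = k\<close> by simp
  then show False using p'(2) \<open>separates E q x k\<close> unfolding separates_def by simp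
qed

definition lost_leaves :: "'n set set \<Rightarrow> 'n set set \<Rightarrow> 'n set" where
  "lost_leaves E1 E2 = leaves E1 - leaves E2"

definition leaf_exchange :: "'n set set \<Rightarrow> 'n set set \<Rightarrow> 'n \<Rightarrow> 'n" where
  "leaf_exchange E1 E2 x = (if x \<in> lost_leaves E1 E2 then nbr E1 x
      else if x \<in> lost_leaves E2 E1 then nbr E2 x else x)"

lemma leaf_exchange_commute: "leaf_exchange E1 E2 = leaf_exchange E2 E1"
  unfolding leaf_exchange_def lost_leaves_def by (auto simp: fun_eq_iff)

lemma lost_leaf_partner:
  fixes E1 E2 :: "'n set set" and a b c :: 'n
  assumes tree1: "is_tree E1" and tree2: "is_tree E2" and same: "same_maximizers E1 E2"
    and "distinct [a, b, c]" and x: "x \<in> lost_leaves E1 E2"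
  shows "nbr E1 x \<in> lost_leaves E2 E1 \<and> nbr E2 (nbr E1 x) = x"
proof -
  have "x \<in> leaves E1" "x \<notin> leaves E2" using x unfolding lost_leaves_def by auto
  then have "nbr E1 x \<in> leaves E2 \<and> nbr E2 (nbr E1 x) = x"
    using leaf_partner[OF tree2 same_maximizers_sym[OF same]] by blast
  moreover have "nbr E1 x \<notin> leaves E1"
    using leaf_nbr_not_leaf[OF tree1 \<open>distinct [a, b, c]\<close> \<open>x \<in> leaves E1\<close>] .
  ultimately show ?thesis unfolding lost_leaves_def by auto
qed

locale maximizer_equivalent_trees =
  fixes E1 E2 :: "'n set set"
  assumes tree1: "is_tree E1" and tree2: "is_tree E2" and same: "same_maximizers E1 E2"
    and three: "\<exists>a b c :: 'n. distinct [a, b, c]"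
begin

lemma lost_leaf_partner1: "x \<in> lost_leaves E1 E2 \<Longrightarrow> nbr E1 x \<in> lost_leaves E2 E1 \<and> nbr E2 (nbr E1 x) = x"
  using three lost_leaf_partner[OF tree1 tree2 same] by blast

lemma lost_leaf_partner2: "x \<in> lost_leaves E2 E1 \<Longrightarrow> nbr E2 x \<in> lost_leaves E1 E2 \<and> nbr E1 (nbr E2 x) = x"
  using three lost_leaf_partner[OF tree2 tree1 same_maximizers_sym[OF same]] by blast

lemma leaf_exchange_involution: "leaf_exchange E1 E2 (leaf_exchange E1 E2 x) = x"
proof -
  consider "x \<in> lost_leaves E1 E2" | "x \<in> lost_leaves E2 E1"
    | "x \<notin> lost_leaves E1 E2" "x \<notin> lost_leaves E2 E1" by blast
  then show ?thesis
  proof cases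
    case 1
    then show ?thesis
      using lost_leaf_partner1[OF 1] by (auto simp: leaf_exchange_def lost_leaves_def)
  next
    case 2
    then show ?thesis
      using lost_leaf_partner2[OF 2] by (auto simp: leaf_exchange_def lost_leaves_def)
  qed (simp add: leaf_exchange_def)
qed

lemma leaf_exchange_adj: "leaf_exchange E1 E2 x = x \<or> adj E1 x (leaf_exchange E1 E2 x)"
proof -
  consider "x \<in> lost_leaves E1 E2" | "x \<in> lost_leaves E2 E1"
    | "x \<notin> lost_leaves E1 E2" "x \<notin> lost_leaves E2 E1" by blast
  then show ?thesis
  proof cases
    case 1
    then show ?thesis using leaf_nbr_adj[of x E1] unfolding leaf_exchange_def lost_leaves_def by simp
  next
    case 2
    then have "leaf_exchange E1 E2 x = nbr E2 x" "nbr E2 x \<in> leaves E1" "nbr E1 (nbr E2 x) = x"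
      using lost_leaf_partner2[OF 2]
      unfolding leaf_exchange_def lost_leaves_def by auto
    then have "adj E1 (nbr E2 x) x" using leaf_nbr_adj[of "nbr E2 x" E1] by simp
    then show ?thesis using \<open>leaf_exchange E1 E2 x = nbr E2 x\<close> adj_commute by metis
  qed (simp add: leaf_exchange_def)
qed

lemma reach_avoiding_leaf_exchange:
  "k \<noteq> x \<Longrightarrow> k \<noteq> leaf_exchange E1 E2 x \<Longrightarrow> reach_avoiding E1 k x (leaf_exchange E1 E2 x)"
  using leaf_exchange_adj[of x] reach_avoiding_refl reach_avoiding_edge by metis

lemma separator_of_exchanged_edge:
  assumes uv: "adj E1 u v" and sep: "separates E1 k (leaf_exchange E1 E2 u) (leaf_exchange E1 E2 v)"
  shows "k \<in> {u, v}"
proof (rule ccontr)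
  let ?s = "leaf_exchange E1 E2"
  assume "k \<notin> {u, v}"
  have "k \<noteq> ?s u" "k \<noteq> ?s v" using sep unfolding separates_def by auto
  have "k \<noteq> u" "k \<noteq> v" using \<open>k \<notin> {u, v}\<close> by auto
  have "reach_avoiding E1 k (?s u) u"
    using reach_avoiding_sym[OF reach_avoiding_leaf_exchange[OF \<open>k \<noteq> u\<close> \<open>k \<noteq> ?s u\<close>]] .
  moreover have "reach_avoiding E1 k u v" using reach_avoiding_edge[OF uv \<open>k \<noteq> u\<close>[symmetric] \<open>k \<noteq> v\<close>[symmetric]] .
  moreover have "reach_avoiding E1 k v (?s v)"
    using reach_avoiding_leaf_exchange[OF \<open>k \<noteq> v\<close> \<open>k \<noteq> ?s v\<close>] .
  ultimately have "reach_avoiding E1 k (?s u) (?s v)" using reach_avoiding_trans by metis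
  then show False using sep unfolding separates_def by blast
qed

text \<open>An edge uv of E1 is carried to a pair with no separator in E2: a separator k
  of the exchanged pair in E2 is not a leaf of E2, hence maximizes in E1 as well,
  and a short case analysis on whether k is a leaf of E1 rules it out.\<close>
lemma leaf_exchange_preserves_adj:
  assumes uv: "adj E1 u v"
  shows "adj E2 (leaf_exchange E1 E2 u) (leaf_exchange E1 E2 v)"
proof -
  let ?s = "leaf_exchange E1 E2"
  have "?s u \<noteq> ?s v"
  proof
    assume "?s u = ?s v"
    then have "u = v" using leaf_exchange_involution by metis
    then show False using uv adj_irrefl by metis
  qed
  have "\<not> separates E2 k (?s u) (?s v)" for k
  proof
    assume sep2: "separates E2 k (?s u) (?s v)"
    have k_ne: "k \<notin> {?s u, ?s v}" using sep2 unfolding separates_def by auto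
    have "k \<notin> leaves E2" using separates_not_leaf[OF tree2 sep2] .
    then have "ratio_maximizer E2 k (?s u) (?s v)"
      using sep2 unfolding ratio_maximizer_def pivot_def by simp
    then have max1: "ratio_maximizer E1 k (?s u) (?s v)"
      using same_maximizersD[OF same \<open>?s u \<noteq> ?s v\<close> k_ne] by blast
    show False
    proof (cases "k \<in> leaves E1")
      case False
      then have "k \<in> {u, v}"
        using max1 k_ne separator_of_exchanged_edge[OF uv] unfolding ratio_maximizer_def pivot_def by simp
      then have "?s k \<noteq> k" using k_ne by auto
      then have "k \<in> lost_leaves E1 E2 \<or> k \<in> lost_leaves E2 E1"
        unfolding leaf_exchange_def by (auto split: if_splits)
      then show False using False \<open>k \<notin> leaves E2\<close> unfolding lost_leaves_def by auto
    next
      case True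
      define q where "q = nbr E1 k"
      have "k \<in> lost_leaves E1 E2" using True \<open>k \<notin> leaves E2\<close> unfolding lost_leaves_def by simp
      then have "q \<in> lost_leaves E2 E1" "nbr E2 q = k"
        using lost_leaf_partner1 unfolding q_def by auto
      then have "?s q = k" unfolding leaf_exchange_def lost_leaves_def by auto
      have "q \<in> {?s u, ?s v} \<or> separates E1 q (?s u) (?s v)"
        using max1 True unfolding ratio_maximizer_def pivot_def q_def by simp
      then have "q \<in> {?s u, ?s v, u, v}" using separator_of_exchanged_edge[OF uv] by blast
      then show False
      proof (elim insertE)
        assume "q = ?s u"
        then have "u = k" using leaf_exchange_involution[of u] \<open>?s q = k\<close> by simp
        then have "v = q" using leaf_adj_eq_nbr[OF True] uv unfolding q_def by simp
        then show False using \<open>?s q = k\<close> k_ne by simp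
      next
        assume "q = ?s v"
        then have "v = k" using leaf_exchange_involution[of v] \<open>?s q = k\<close> by simp
        then have "adj E1 k u" using uv adj_commute by metis
        then have "u = q" using leaf_adj_eq_nbr[OF True] unfolding q_def by simp
        then show False using \<open>?s q = k\<close> k_ne by simp
      qed (use \<open>?s q = k\<close> k_ne in auto)
    qed
  qed
  then show ?thesis using tree_adj_iff_no_separator[OF tree2 \<open>?s u \<noteq> ?s v\<close>] by blast
qed

lemma leaf_swap_lost_leaves: "leaf_swap E1 (lost_leaves E1 E2) = leaf_exchange E1 E2"
proof
  fix x
  show "leaf_swap E1 (lost_leaves E1 E2) x = leaf_exchange E1 E2 x"
  proof (cases "x \<in> lost_leaves E2 E1")
    case True
    have partner: "nbr E2 x \<in> lost_leaves E1 E2 \<and> nbr E1 (nbr E2 x) = x"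
      using lost_leaf_partner2[OF True] .
    have "(THE a. a \<in> lost_leaves E1 E2 \<and> nbr E1 a = x) = nbr E2 x"
      using partner lost_leaf_partner1 by (intro the_equality) metis+
    then show ?thesis
      using True partner unfolding leaf_swap_def leaf_exchange_def lost_leaves_def by auto
  next
    case False
    then have "\<not> (\<exists>a\<in>lost_leaves E1 E2. nbr E1 a = x)" using lost_leaf_partner1 by blast
    then show ?thesis using False unfolding leaf_swap_def leaf_exchange_def by auto
  qed
qed

lemma admissible_lost_leaves: "admissible_leaf_set E1 (lost_leaves E1 E2)"
  unfolding admissible_leaf_set_def
proof (intro conjI ballI impI)
  show "lost_leaves E1 E2 \<subseteq> leaves E1" unfolding lost_leaves_def by auto
  show "nbr E1 a \<noteq> nbr E1 b" if "a \<in> lost_leaves E1 E2" "b \<in> lost_leaves E1 E2" "a \<noteq> b" for a b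
    using that lost_leaf_partner1 by metis
qed

end

lemma (in maximizer_equivalent_trees) maximizer_equivalent_trees_sym:
  "maximizer_equivalent_trees E2 E1"
  using tree1 tree2 same_maximizers_sym[OF same] three by unfold_locales

lemma (in maximizer_equivalent_trees) swapped_tree_lost_leaves:
  "swapped_tree E1 (lost_leaves E1 E2) = E2"
proof -
  interpret sym: maximizer_equivalent_trees E2 E1 by (rule maximizer_equivalent_trees_sym)
  let ?s = "leaf_exchange E1 E2"
  have edges1: "e \<in> E1 \<longleftrightarrow> (\<exists>x y. e = {x, y} \<and> adj E1 x y)"
    and edges2: "e \<in> E2 \<longleftrightarrow> (\<exists>x y. e = {x, y} \<and> adj E2 x y)" for e
    using tree1 tree2 graph_edge_iff unfolding is_tree_def by blast+
  have "(\<lambda>e. ?s ` e) ` E1 = E2"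
  proof
    show "(\<lambda>e. ?s ` e) ` E1 \<subseteq> E2"
    proof
      fix e
      assume "e \<in> (\<lambda>e. ?s ` e) ` E1"
      then obtain e' where "e' \<in> E1" "e = ?s ` e'" by blast
      then obtain x y where "e = {?s x, ?s y}" "adj E1 x y" using edges1 by auto
      then show "e \<in> E2" using leaf_exchange_preserves_adj unfolding adj_def by simp
    qed
    show "E2 \<subseteq> (\<lambda>e. ?s ` e) ` E1"
    proof
      fix e
      assume "e \<in> E2"
      then obtain x y where e: "e = {x, y}" "adj E2 x y" using edges2 by blast
      then have "adj E1 (?s x) (?s y)"
        using sym.leaf_exchange_preserves_adj leaf_exchange_commute by metis
      then have "{?s x, ?s y} \<in> E1" unfolding adj_def by simp
      moreover have "e = ?s ` {?s x, ?s y}" using e(1) leaf_exchange_involution by simp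
      ultimately show "e \<in> (\<lambda>e. ?s ` e) ` E1" by blast
    qed
  qed
  then show ?thesis unfolding swapped_tree_def leaf_swap_lost_leaves .
qed

lemma tree_classI: "admissible_leaf_set E S \<Longrightarrow> swapped_tree E S = E' \<Longrightarrow> E' \<in> tree_class E"
  unfolding tree_class_def by blast

lemma tree_class_refl: "E \<in> tree_class E"
proof (rule tree_classI)
  show "admissible_leaf_set E {}" unfolding admissible_leaf_set_def by simp
  show "swapped_tree E {} = E" unfolding swapped_tree_def leaf_swap_def by simp
qed

lemma tree_few_vertices_complete:
  fixes E :: "'n set set"
  assumes tree: "is_tree E" and few: "\<not> (\<exists>a b c :: 'n. distinct [a, b, c])"
  shows "E = {{x, y} | x y. x \<noteq> y}"
proof -
  have "\<not> separates E k x y" for k x y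
    using few reach_avoiding_refl unfolding separates_def by fastforce
  then have adj_iff: "adj E x y \<longleftrightarrow> x \<noteq> y" for x y
    using tree_adj_iff_no_separator[OF tree] adj_irrefl by metis
  have "is_graph E" using tree unfolding is_tree_def by blast
  show ?thesis
  proof (rule set_eqI)
    show "e \<in> E \<longleftrightarrow> e \<in> {{x, y} | x y. x \<noteq> y}" for e
      using graph_edge_iff[OF \<open>is_graph E\<close>, of e] adj_iff by simp
  qed
qed

lemma tree_class_of_same_maximizers:
  fixes E1 E2 :: "'n set set"
  assumes "is_tree E1" "is_tree E2" "same_maximizers E1 E2"
  shows "E2 \<in> tree_class E1"
proof (cases "\<exists>a b c :: 'n. distinct [a, b, c]")
  case True
  interpret maximizer_equivalent_trees E1 E2
    using assms True by unfold_locales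
  show ?thesis by (rule tree_classI[OF admissible_lost_leaves swapped_tree_lost_leaves])
next
  case False
  then have "E2 = E1"
    using tree_few_vertices_complete[OF assms(1)] tree_few_vertices_complete[OF assms(2)] by simp
  then show ?thesis using tree_class_refl by simp
qed

lemma offdiag_eq_of_add_diag:
  assumes "nonneg_diag_mat D" "nonneg_diag_mat D'" "A + D = B + D'" "a \<noteq> b"
  shows "A $ a $ b = B $ a $ b"
proof -
  have "(A + D) $ a $ b = (B + D') $ a $ b" using assms(3) by simp
  then show ?thesis using assms(1,2,4) unfolding nonneg_diag_mat_def by simp
qed

theorem theorem2:
  fixes Sigma_star D_star Sigma' D' :: "real^'n::finite^'n"
  assumes "pos_def_mat Sigma_star"
    and "is_tree (ci_graph Sigma_star)"
    and "nonneg_diag_mat D_star"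
    and "pos_def_mat Sigma'"
    and "is_tree (ci_graph Sigma')"
    and "nonneg_diag_mat D'"
    and "Sigma_star + D_star = Sigma' + D'"
  shows "ci_graph Sigma' \<in> tree_class (ci_graph Sigma_star)"
proof -
  have "Sigma_star $ a $ b = Sigma' $ a $ b" if "a \<noteq> b" for a b
    using offdiag_eq_of_add_diag[OF assms(3,6,7) that] .
  then have "same_maximizers (ci_graph Sigma_star) (ci_graph Sigma')"
    using same_maximizers_of_offdiag_eq[OF assms(1,2,4,5)] by blast
  then show ?thesis using tree_class_of_same_maximizers assms(2,5) by blast
qed

end
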